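(* Let $P\subset\mathbb R^n$ be a bounded open convex set and $\mu$ Lebesgue measure. (a) For every $\varepsilon>0$ there exists a convex $\phi_\varepsilon\in L^1(P)$ with $\int_P\phi_\varepsilon\,d\mu=0$ and $\inf_P\phi_\varepsilon<0$ such that $\frac{1}{\mu(P)}\int_P|\phi_\varepsilon|\,d\mu\ge -2(1-\varepsilon)\inf_P\phi_\varepsilon$. (b) There is no convex $\phi\in L^1(P)$ with $\int_P\phi\,d\mu=0$, $\phi\not\equiv 0$, and $\frac{1}{\mu(P)}\int_P|\phi|\,d\mu=-2\inf_P\phi$.
   Context: For convex $\phi\in L^1(P)$ with $\int_P\phi=0$ one always has $\frac{1}{\mu(P)}\int_P|\phi|\,d\mu\le-2\inf_P\phi$. *)

theory Defs
  imports "HOL-Analysis.Analysis"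
begin

end

theory Submission
  imports Defs
begin

text \<open>
  (a) Let \<open>\<psi> x = max 0 (v \<bullet> x - a)\<close> be a hinge whose support meets P only in a thin cap, and
  let c be its mean over P. Then \<open>\<psi> - c\<close> is convex with mean zero and infimum \<open>-c\<close>, and
  it equals \<open>-c\<close> on all of P except the cap, so its mean absolute value is nearly \<open>2c\<close>.

  (b) If \<open>\<integral>\<phi> = 0\<close> then \<open>\<integral>\<bar>\<phi>\<bar> = \<integral>(\<bar>\<phi>\<bar> - \<phi>)\<close>, and \<open>\<bar>\<phi>\<bar> - \<phi> = 2 max 0 (-\<phi>) \<le> -2 inf \<phi>\<close>.
  A convex function on an open set is continuous, so equality in the integrated bound forces
  \<open>\<phi> \<equiv> inf \<phi>\<close>, which contradicts mean zero unless \<open>\<phi> \<equiv> 0\<close>.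
\<close>

lemma set_integral_continuous_nonneg_eq_0_imp_zero:
  fixes f :: "'a::euclidean_space \<Rightarrow> real"
  assumes "open U" and cont: "continuous_on U f" and int: "set_integrable lebesgue U f"
    and nonneg: "\<And>x. x \<in> U \<Longrightarrow> 0 \<le> f x" and zero: "(\<integral>x\<in>U. f x \<partial>lebesgue) = 0"
    and "y \<in> U"
  shows "f y = 0"
proof (rule ccontr)
  assume "f y \<noteq> 0"
  define S where "S = U \<inter> f -` {0<..}"
  have "open S"
    unfolding S_def using continuous_open_preimage[OF cont \<open>open U\<close>] by auto
  moreover have "S \<noteq> {}"
    using \<open>f y \<noteq> 0\<close> nonneg[OF \<open>y \<in> U\<close>] \<open>y \<in> U\<close> by (auto simp: S_def)
  ultimately have "\<not> negligible S"
    using open_not_negligible by blast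
  have "AE x in lebesgue. indicator U x * f x = 0"
    using int zero unfolding set_integrable_def set_lebesgue_integral_def
    by (subst integral_nonneg_eq_0_iff_AE[symmetric]) (auto simp: indicator_def nonneg)
  then have "AE x in lebesgue. x \<notin> S"
    by eventually_elim (auto simp: S_def indicator_def)
  moreover have "S \<in> sets lebesgue"
    using \<open>open S\<close> by simp
  ultimately have "S \<in> null_sets lebesgue"
    using AE_iff_null_sets by blast
  then show False
    using \<open>\<not> negligible S\<close> negligible_iff_null_sets by blast
qed

lemma set_integral_pos_if_continuous_nonneg:
  fixes f :: "'a::euclidean_space \<Rightarrow> real"
  assumes "open U" and "continuous_on U f" and int: "set_integrable lebesgue U f"
    and nonneg: "\<And>x. x \<in> U \<Longrightarrow> 0 \<le> f x" and "\<exists>x\<in>U. f x \<noteq> 0"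
  shows "0 < (\<integral>x\<in>U. f x \<partial>lebesgue)"
proof -
  have "(\<integral>x\<in>U. f x \<partial>lebesgue) \<noteq> 0"
    using set_integral_continuous_nonneg_eq_0_imp_zero[OF assms(1-4)] \<open>\<exists>x\<in>U. f x \<noteq> 0\<close> by blast
  moreover have "0 \<le> (\<integral>x\<in>U. f x \<partial>lebesgue)"
    using set_integral_mono[of lebesgue U "\<lambda>x. 0" f] int nonneg by simp
  ultimately show ?thesis
    by simp
qed

lemma open_lmeasurable_measure_pos:
  assumes "open S" and "S \<in> lmeasurable" and "S \<noteq> {}"
  shows "0 < measure lebesgue S"
proof -
  have "measure lebesgue S \<noteq> 0"
    using open_not_negligible[OF \<open>open S\<close> \<open>S \<noteq> {}\<close>] negligible_iff_measure0[OF \<open>S \<in> lmeasurable\<close>] by simp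
  then show ?thesis
    by (simp add: order_less_le)
qed

lemma set_integral_const_fmeasurable:
  fixes c :: real
  assumes "A \<in> fmeasurable M"
  shows "(\<integral>x\<in>A. c \<partial>M) = measure M A * c"
  using set_integral_const[of A M c] fmeasurableD[OF assms] fmeasurableD2[OF assms]
  by (simp add: infinity_ennreal_def)

lemma set_integral_abs_diff_ge:
  fixes f :: "'a \<Rightarrow> real"
  assumes int: "set_integrable M P f" and P: "P \<in> fmeasurable M"
    and "Z \<in> sets M" and "Z \<subseteq> P" and zero_on: "\<And>x. x \<in> Z \<Longrightarrow> f x = 0"
    and "c \<ge> 0" and mean: "(\<integral>x\<in>P. f x \<partial>M) = c * measure M P"
  shows "2 * c * measure M Z \<le> (\<integral>x\<in>P. \<bar>f x - c\<bar> \<partial>M)"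
proof -
  have "P \<in> sets M" and "emeasure M P \<noteq> \<infinity>"
    using fmeasurableD[OF P] fmeasurableD2[OF P] by (simp_all add: infinity_ennreal_def)
  then have int_const: "set_integrable M P (\<lambda>x. c)"
    by (simp add: set_integrable_def less_top)
  have int_dev: "set_integrable M P (\<lambda>x. f x - c)"
    using int int_const by (rule set_integral_diff)
  have int_abs: "set_integrable M P (\<lambda>x. \<bar>f x - c\<bar>)"
    using int_dev by (rule set_integrable_abs)
  \<comment> \<open>The deviation from the mean integrates to zero, so only its negative part counts.\<close>
  have "(\<integral>x\<in>P. f x - c \<partial>M) = 0"
    using set_integral_diff(2)[OF int int_const] mean
      set_integral_const_fmeasurable[OF P, of c] by (simp add: mult.commute)
  then have abs_eq: "(\<integral>x\<in>P. \<bar>f x - c\<bar> \<partial>M) = (\<integral>x\<in>P. \<bar>f x - c\<bar> - (f x - c) \<partial>M)"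
    using set_integral_diff(2)[OF int_abs int_dev] by simp
  have "emeasure M Z \<noteq> \<infinity>"
    using emeasure_mono[OF \<open>Z \<subseteq> P\<close> \<open>P \<in> sets M\<close>] \<open>emeasure M P \<noteq> \<infinity>\<close>
    by (auto simp: top_unique)
  moreover have restrict: "(\<lambda>x. indicator P x *\<^sub>R (2 * c * indicator Z x)) = (\<lambda>x. 2 * c * indicator Z x :: real)"
    using \<open>Z \<subseteq> P\<close> by (auto simp: indicator_def fun_eq_iff)
  ultimately have int_Z: "set_integrable M P (\<lambda>x. 2 * c * indicator Z x)"
    and integral_Z: "(\<integral>x\<in>P. 2 * c * indicator Z x \<partial>M) = 2 * c * measure M Z"
    using \<open>Z \<in> sets M\<close> unfolding set_integrable_def set_lebesgue_integral_def restrict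
    by (simp_all add: less_top)
  have "(\<integral>x\<in>P. 2 * c * indicator Z x \<partial>M) \<le> (\<integral>x\<in>P. \<bar>f x - c\<bar> - (f x - c) \<partial>M)"
    using int_Z set_integral_diff(1)[OF int_abs int_dev]
    by (rule set_integral_mono) (use zero_on \<open>c \<ge> 0\<close> in \<open>auto simp: indicator_def\<close>)
  then show ?thesis
    using abs_eq integral_Z by linarith
qed

lemma eq_lower_bound_if_set_integral_abs_ge:
  fixes f :: "'a::euclidean_space \<Rightarrow> real"
  assumes "open P" and P: "P \<in> lmeasurable" and cont: "continuous_on P f"
    and int: "set_integrable lebesgue P f" and mean_zero: "(\<integral>x\<in>P. f x \<partial>lebesgue) = 0"
    and lower: "\<And>x. x \<in> P \<Longrightarrow> m \<le> f x" and "m < 0"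
    and abs_ge: "- 2 * m * measure lebesgue P \<le> (\<integral>x\<in>P. \<bar>f x\<bar> \<partial>lebesgue)"
    and "x \<in> P"
  shows "f x = m"
proof -
  have int_const: "set_integrable lebesgue P (\<lambda>x. - 2 * m)"
    using P by simp
  have int_abs: "set_integrable lebesgue P (\<lambda>x. \<bar>f x\<bar>)"
    using int by (rule set_integrable_abs)
  \<comment> \<open>\<open>\<bar>f x\<bar> - f x\<close> is twice the negative part of \<open>f x\<close>, hence at most \<open>-2m\<close>.\<close>
  define g where "g x = - 2 * m - (\<bar>f x\<bar> - f x)" for x
  have g_nonneg: "0 \<le> g x" if "x \<in> P" for x
    using lower[OF that] \<open>m < 0\<close> by (simp add: g_def abs_if)
  have int_g: "set_integrable lebesgue P g"
    unfolding g_def using int_const set_integral_diff(1)[OF int_abs int] by (rule set_integral_diff)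
  have "(\<integral>x\<in>P. g x \<partial>lebesgue) = - 2 * m * measure lebesgue P - (\<integral>x\<in>P. \<bar>f x\<bar> \<partial>lebesgue)"
    unfolding g_def using set_integral_diff(2)[OF int_const set_integral_diff(1)[OF int_abs int]]
      set_integral_diff(2)[OF int_abs int] mean_zero set_integral_const_fmeasurable[OF P] by simp
  moreover have "0 \<le> (\<integral>x\<in>P. g x \<partial>lebesgue)"
    using set_integral_mono[of lebesgue P "\<lambda>x. 0" g] int_g g_nonneg by simp
  ultimately have "(\<integral>x\<in>P. g x \<partial>lebesgue) = 0"
    using abs_ge by linarith
  moreover have "continuous_on P g"
    unfolding g_def using cont by (intro continuous_intros)
  ultimately have "g x = 0"
    using set_integral_continuous_nonneg_eq_0_imp_zero[OF \<open>open P\<close> _ int_g g_nonneg _ \<open>x \<in> P\<close>] by blast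
  then show ?thesis
    using \<open>m < 0\<close> by (auto simp: g_def abs_if split: if_splits)
qed

lemma set_integral_abs_less_of_mean_zero:
  fixes f :: "'a::euclidean_space \<Rightarrow> real"
  assumes "open P" and P: "P \<in> lmeasurable" and cont: "continuous_on P f"
    and int: "set_integrable lebesgue P f" and mean_zero: "(\<integral>x\<in>P. f x \<partial>lebesgue) = 0"
    and lower: "\<And>x. x \<in> P \<Longrightarrow> m \<le> f x" and nonzero: "\<exists>x\<in>P. f x \<noteq> 0"
  shows "(\<integral>x\<in>P. \<bar>f x\<bar> \<partial>lebesgue) < - 2 * m * measure lebesgue P"
proof (rule ccontr)
  assume "\<not> ?thesis"
  then have abs_ge: "- 2 * m * measure lebesgue P \<le> (\<integral>x\<in>P. \<bar>f x\<bar> \<partial>lebesgue)"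
    by simp
  have "m < 0"
  proof (rule ccontr)
    assume "\<not> m < 0"
    then have "0 < (\<integral>x\<in>P. f x \<partial>lebesgue)"
      using set_integral_pos_if_continuous_nonneg[OF \<open>open P\<close> cont int _ nonzero] lower by force
    with mean_zero show False by simp
  qed
  then have "(\<integral>x\<in>P. f x \<partial>lebesgue) = (\<integral>x\<in>P. m \<partial>lebesgue)"
    using eq_lower_bound_if_set_integral_abs_ge[OF assms(1-6) _ abs_ge] P
    by (intro set_lebesgue_integral_cong) auto
  also have "\<dots> = measure lebesgue P * m"
    using P by (rule set_integral_const_fmeasurable)
  also have "\<dots> < 0"
    using open_lmeasurable_measure_pos[OF \<open>open P\<close> P] nonzero \<open>m < 0\<close>
    by (metis empty_iff mult_pos_neg)
  finally show False
    using mean_zero by simp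
qed

lemma convex_on_max:
  assumes f: "convex_on S f" and g: "convex_on S g"
  shows "convex_on S (\<lambda>x. max (f x) (g x))"
proof (rule convex_onI)
  show "convex S"
    using f convex_on_imp_convex by blast
next
  fix t :: real and x y assume "0 < t" "t < 1" "x \<in> S" "y \<in> S"
  let ?z = "(1 - t) *\<^sub>R x + t *\<^sub>R y"
  have "f ?z \<le> (1 - t) * f x + t * f y" and "g ?z \<le> (1 - t) * g x + t * g y"
    using convex_onD[OF f] convex_onD[OF g] \<open>0 < t\<close> \<open>t < 1\<close> \<open>x \<in> S\<close> \<open>y \<in> S\<close> by simp_all
  moreover have "(1 - t) * f x + t * f y \<le> (1 - t) * max (f x) (g x) + t * max (f y) (g y)"
    and "(1 - t) * g x + t * g y \<le> (1 - t) * max (f x) (g x) + t * max (f y) (g y)"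
    using \<open>0 < t\<close> \<open>t < 1\<close> by (intro add_mono mult_left_mono; simp)+
  ultimately show "max (f ?z) (g ?z) \<le> (1 - t) * max (f x) (g x) + t * max (f y) (g y)"
    by simp
qed

lemma convex_on_inner_right: "convex S \<Longrightarrow> convex_on S (\<lambda>x. v \<bullet> x)"
  by (simp add: convex_on_def inner_add_right)

lemma convex_on_reflection_bound:
  fixes f :: "'a::real_vector \<Rightarrow> real"
  assumes conv: "convex_on P f" and "x \<in> P" and "x0 + t *\<^sub>R (x0 - x) \<in> P" and "t > 0"
  shows "(1 + t) * f x0 \<le> f (x0 + t *\<^sub>R (x0 - x)) + t * f x"
proof -
  define z where "z = x0 + t *\<^sub>R (x0 - x)"
  define u where "u = t / (1 + t)"
  have weights: "1 - u = inverse (1 + t)" "u = inverse (1 + t) * t"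
    using \<open>t > 0\<close> by (simp_all add: u_def field_simps)
  then have "(1 - u) *\<^sub>R z + u *\<^sub>R x = inverse (1 + t) *\<^sub>R (z + t *\<^sub>R x)"
    by (simp add: scaleR_add_right)
  also have "z + t *\<^sub>R x = (1 + t) *\<^sub>R x0"
    by (simp add: z_def algebra_simps)
  finally have "x0 = (1 - u) *\<^sub>R z + u *\<^sub>R x"
    using \<open>t > 0\<close> by simp
  then have "f x0 \<le> (1 - u) * f z + u * f x"
    using convex_onD[OF conv, of u z x] assms(2-4) by (simp add: u_def z_def)
  also have "\<dots> = inverse (1 + t) * (f z + t * f x)"
    by (subst weights(1), subst weights(2)) (simp add: algebra_simps)
  finally show ?thesis
    using \<open>t > 0\<close> by (simp add: z_def field_simps)
qed

lemma convex_on_bdd_below: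
  fixes f :: "'a::euclidean_space \<Rightarrow> real"
  assumes "bounded P" and "open P" and conv: "convex_on P f"
  shows "bdd_below (f ` P)"
proof (cases "P = {}")
  case False
  then obtain x0 where "x0 \<in> P" by blast
  have "isCont f x0"
    using convex_on_continuous[OF \<open>open P\<close> conv] \<open>open P\<close> \<open>x0 \<in> P\<close>
    by (simp add: continuous_on_eq_continuous_at)
  then obtain r where "r > 0" and r: "\<And>z. dist z x0 < r \<Longrightarrow> dist (f z) (f x0) < 1"
    unfolding continuous_at_eps_delta by (meson zero_less_one)
  obtain r' where "r' > 0" and "ball x0 r' \<subseteq> P"
    using open_contains_ball \<open>open P\<close> \<open>x0 \<in> P\<close> by blast
  obtain b where "b > 0" and b: "\<And>x. x \<in> P \<Longrightarrow> norm x \<le> b"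
    using \<open>bounded P\<close> bounded_pos by blast
  define D where "D = b + norm x0"
  have "D > 0"
    using \<open>b > 0\<close> by (simp add: D_def add_pos_nonneg)
  have D: "norm (x0 - x) \<le> D" if "x \<in> P" for x
    using b[OF that] norm_triangle_ineq4[of x0 x] by (simp add: D_def)
  define t where "t = min r r' / (2 * D)"
  have "t > 0"
    using \<open>r > 0\<close> \<open>r' > 0\<close> \<open>D > 0\<close> by (simp add: t_def)
  show ?thesis
  proof (rule bdd_belowI2)
    fix x assume "x \<in> P"
    \<comment> \<open>Reflecting x through x0 lands in a ball around x0 on which f is bounded above.\<close>
    define z where "z = x0 + t *\<^sub>R (x0 - x)"
    have "dist z x0 = t * norm (x0 - x)"
      using \<open>t > 0\<close> by (simp add: z_def dist_norm)
    also have "\<dots> \<le> t * D"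
      using D[OF \<open>x \<in> P\<close>] \<open>t > 0\<close> by simp
    also have "\<dots> < min r r'"
      using \<open>D > 0\<close> \<open>r > 0\<close> \<open>r' > 0\<close> by (auto simp: t_def min_def)
    finally have "z \<in> P" and "f z < f x0 + 1"
      using \<open>ball x0 r' \<subseteq> P\<close> r[of z] by (auto simp: dist_commute dist_real_def)
    moreover have "(1 + t) * f x0 \<le> f z + t * f x"
      using convex_on_reflection_bound[OF conv \<open>x \<in> P\<close>, of x0 t] \<open>z \<in> P\<close> \<open>t > 0\<close>
      by (simp add: z_def)
    ultimately show "f x0 - 1 / t \<le> f x"
      using \<open>t > 0\<close> by (simp add: field_simps)
  qed
qed simp

lemma inner_less_Sup_open:
  fixes P :: "'a::euclidean_space set"
  assumes "open P" and "bounded P" and "x \<in> P" and "v \<noteq> 0"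
  shows "v \<bullet> x < Sup ((\<lambda>x. v \<bullet> x) ` P)"
proof -
  obtain r where "r > 0" and "ball x r \<subseteq> P"
    using open_contains_ball \<open>open P\<close> \<open>x \<in> P\<close> by blast
  define y where "y = x + (r / (2 * norm v)) *\<^sub>R v"
  have "dist x y = r / 2"
    using \<open>v \<noteq> 0\<close> \<open>r > 0\<close> by (simp add: y_def dist_norm)
  then have "y \<in> P"
    using \<open>r > 0\<close> \<open>ball x r \<subseteq> P\<close> by auto
  then have "v \<bullet> y \<le> Sup ((\<lambda>x. v \<bullet> x) ` P)"
    using bounded_linear_image[OF \<open>bounded P\<close> bounded_linear_inner_right]
    by (intro cSup_upper imageI bounded_imp_bdd_above)
  moreover have "v \<bullet> y = v \<bullet> x + r * norm v / 2"
    using \<open>v \<noteq> 0\<close> by (simp add: y_def inner_add_right power2_norm_eq_inner[symmetric] power2_eq_square)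
  ultimately show ?thesis
    using \<open>r > 0\<close> \<open>v \<noteq> 0\<close> by (smt (verit) divide_pos_pos mult_pos_pos zero_less_norm_iff)
qed

lemma measure_halfspace_cap_tendsto_0:
  fixes P :: "'a::euclidean_space set"
  assumes "bounded P" and "open P" and below: "\<And>x. x \<in> P \<Longrightarrow> v \<bullet> x < s" and "d > 0"
  shows "(\<lambda>n. measure lebesgue (P \<inter> {x. s - d / Suc n < v \<bullet> x})) \<longlonglongrightarrow> 0"
proof -
  define A where "A n = P \<inter> {x. s - d / Suc n < v \<bullet> x}" for n :: nat
  have A_lmeasurable: "A n \<in> lmeasurable" for n
    unfolding A_def using \<open>bounded P\<close> \<open>open P\<close>
    by (intro lmeasurable_open bounded_Int open_Int open_halfspace_gt) auto
  have "decseq A"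
  proof (rule decseq_SucI)
    fix n
    have "d / Suc (Suc n) \<le> d / Suc n"
      using \<open>d > 0\<close> by (intro divide_left_mono) auto
    then show "A (Suc n) \<subseteq> A n"
      by (auto simp: A_def)
  qed
  moreover have "(\<Inter>n. A n) = {}"
  proof (rule ccontr)
    assume "(\<Inter>n. A n) \<noteq> {}"
    then obtain x where x: "\<And>n. x \<in> A n" by blast
    then have "0 < s - v \<bullet> x"
      using below by (auto simp: A_def)
    then obtain n where "d / (s - v \<bullet> x) < Suc n"
      using reals_Archimedean2 less_Suc_eq by (metis of_nat_less_iff order.strict_trans)
    then have "d / Suc n < s - v \<bullet> x"
      using \<open>0 < s - v \<bullet> x\<close> by (simp add: field_simps)
    with x[of n] show False by (simp add: A_def)
  qed
  moreover have "range A \<subseteq> sets lebesgue"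
    using A_lmeasurable by auto
  moreover have "emeasure lebesgue (A n) \<noteq> \<infinity>" for n
    using A_lmeasurable[of n] by (metis fmeasurableD2 infinity_ennreal_def)
  ultimately show ?thesis
    using Lim_measure_decseq[of A lebesgue] by (simp add: A_def)
qed

lemma halfspace_cap_measure_small:
  fixes P :: "'a::euclidean_space set"
  assumes "bounded P" and "open P" and "x0 \<in> P" and "v \<noteq> 0" and "e > 0"
  obtains a where "v \<bullet> x0 \<le> a" and "\<exists>x\<in>P. a < v \<bullet> x"
    and "measure lebesgue (P \<inter> {x. a < v \<bullet> x}) < e"
proof -
  define s where "s = Sup ((\<lambda>x. v \<bullet> x) ` P)"
  have below: "v \<bullet> x < s" if "x \<in> P" for x
    unfolding s_def using inner_less_Sup_open[OF \<open>open P\<close> \<open>bounded P\<close> that \<open>v \<noteq> 0\<close>] .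
  define d where "d = s - v \<bullet> x0"
  have "d > 0"
    using below[OF \<open>x0 \<in> P\<close>] by (simp add: d_def)
  have "eventually (\<lambda>n. measure lebesgue (P \<inter> {x. s - d / Suc n < v \<bullet> x}) < e) sequentially"
    using measure_halfspace_cap_tendsto_0[OF \<open>bounded P\<close> \<open>open P\<close> below \<open>d > 0\<close>] \<open>e > 0\<close>
    by (rule order_tendstoD)
  then obtain N where N: "measure lebesgue (P \<inter> {x. s - d / Suc N < v \<bullet> x}) < e"
    unfolding eventually_sequentially by blast
  define a where "a = s - d / Suc N"
  show ?thesis
  proof
    have "d / Suc N \<le> d"
      using \<open>d > 0\<close> by (simp add: divide_le_eq)
    then show "v \<bullet> x0 \<le> a"
      by (simp add: a_def d_def)
    have "a < s"
      using \<open>d > 0\<close> by (simp add: a_def)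
    then show "\<exists>x\<in>P. a < v \<bullet> x"
      unfolding s_def using \<open>x0 \<in> P\<close> by (auto elim: less_cSupE)
    show "measure lebesgue (P \<inter> {x. a < v \<bullet> x}) < e"
      using N by (simp add: a_def)
  qed
qed

lemma hinge_minus_mean:
  fixes P :: "'a::euclidean_space set"
  assumes "bounded P" and "open P" and "convex P"
    and "x0 \<in> P" and "v \<bullet> x0 \<le> a" and "\<exists>x\<in>P. a < v \<bullet> x"
  defines "\<psi> \<equiv> \<lambda>x. max 0 (v \<bullet> x - a)"
    and "c \<equiv> (\<integral>x\<in>P. max 0 (v \<bullet> x - a) \<partial>lebesgue) / measure lebesgue P"
  shows "c > 0" and "convex_on P (\<lambda>x. \<psi> x - c)" and "set_integrable lebesgue P (\<lambda>x. \<psi> x - c)"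
    and "(\<integral>x\<in>P. \<psi> x - c \<partial>lebesgue) = 0" and "Inf ((\<lambda>x. \<psi> x - c) ` P) = - c"
    and "2 * c * measure lebesgue (P \<inter> {x. v \<bullet> x \<le> a}) \<le> (\<integral>x\<in>P. \<bar>\<psi> x - c\<bar> \<partial>lebesgue)"
proof -
  have c_eq: "c = (\<integral>x\<in>P. \<psi> x \<partial>lebesgue) / measure lebesgue P"
    by (simp add: c_def \<psi>_def)
  have P: "P \<in> lmeasurable"
    using \<open>bounded P\<close> \<open>open P\<close> by (rule lmeasurable_open)
  have P_sets: "P \<in> sets lebesgue"
    using P by auto
  have "measure lebesgue P > 0"
    using open_lmeasurable_measure_pos[OF \<open>open P\<close> P] \<open>x0 \<in> P\<close> by blast
  have \<psi>_cont: "continuous_on S \<psi>" for S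
    unfolding \<psi>_def by (intro continuous_intros)
  obtain b where "P \<subseteq> cbox (- b) b"
    using bounded_subset_cbox_symmetric \<open>bounded P\<close> by blast
  then have \<psi>_int: "set_integrable lebesgue P \<psi>"
    using set_integrable_subset[OF absolutely_integrable_continuous[OF \<psi>_cont] P_sets] by blast
  obtain x1 where "x1 \<in> P" and "a < v \<bullet> x1"
    using \<open>\<exists>x\<in>P. a < v \<bullet> x\<close> by blast
  then have "0 < (\<integral>x\<in>P. \<psi> x \<partial>lebesgue)"
    by (intro set_integral_pos_if_continuous_nonneg[OF \<open>open P\<close> \<psi>_cont \<psi>_int])
      (auto simp: \<psi>_def intro!: bexI[of _ x1])
  then show "c > 0"
    using \<open>measure lebesgue P > 0\<close> by (simp add: c_eq)
  show "convex_on P (\<lambda>x. \<psi> x - c)"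
    unfolding \<psi>_def using \<open>convex P\<close>
    by (intro convex_on_diff convex_on_max convex_on_inner_right)
      (simp_all add: convex_on_const concave_on_const)
  show "set_integrable lebesgue P (\<lambda>x. \<psi> x - c)"
    using \<psi>_int P by (intro set_integral_diff) auto
  show "(\<integral>x\<in>P. \<psi> x - c \<partial>lebesgue) = 0"
    using set_integral_diff(2)[OF \<psi>_int, of "\<lambda>x. c"] P set_integral_const_fmeasurable[OF P, of c]
      \<open>measure lebesgue P > 0\<close> by (simp add: c_eq)
  show "Inf ((\<lambda>x. \<psi> x - c) ` P) = - c"
    using \<open>x0 \<in> P\<close> \<open>v \<bullet> x0 \<le> a\<close>
    by (intro cInf_eq_minimum rev_image_eqI[of x0]) (auto simp: \<psi>_def)
  have "P \<inter> {x. v \<bullet> x \<le> a} \<in> sets lebesgue"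
    using P_sets closed_halfspace_le[of v a] by auto
  then show "2 * c * measure lebesgue (P \<inter> {x. v \<bullet> x \<le> a}) \<le> (\<integral>x\<in>P. \<bar>\<psi> x - c\<bar> \<partial>lebesgue)"
    using P_sets \<open>c > 0\<close> \<open>measure lebesgue P > 0\<close>
    by (intro set_integral_abs_diff_ge[OF \<psi>_int P]) (auto simp: \<psi>_def c_eq)
qed

lemma convex_mean_zero_abs_integral_near_extremal:
  fixes P :: "'a::euclidean_space set"
  assumes "bounded P" and "open P" and "convex P" and "P \<noteq> {}" and "\<epsilon> > 0"
  shows "\<exists>\<phi> :: 'a \<Rightarrow> real.
            convex_on P \<phi> \<and> set_integrable lebesgue P \<phi> \<and>
            (\<integral>x\<in>P. \<phi> x \<partial>lebesgue) = 0 \<and>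
            Inf (\<phi> ` P) < 0 \<and>
            (1 / measure lebesgue P) * (\<integral>x\<in>P. \<bar>\<phi> x\<bar> \<partial>lebesgue)
              \<ge> - 2 * (1 - \<epsilon>) * Inf (\<phi> ` P)"
proof -
  have P: "P \<in> lmeasurable"
    using \<open>bounded P\<close> \<open>open P\<close> by (rule lmeasurable_open)
  define \<mu> where "\<mu> = measure lebesgue P"
  have "\<mu> > 0"
    unfolding \<mu>_def using open_lmeasurable_measure_pos[OF \<open>open P\<close> P \<open>P \<noteq> {}\<close>] .
  obtain x0 where "x0 \<in> P"
    using \<open>P \<noteq> {}\<close> by blast
  obtain v :: 'a where "v \<in> Basis"
    using nonempty_Basis by blast
  then have "v \<noteq> 0"
    by (auto simp: nonzero_Basis)
  obtain a where "v \<bullet> x0 \<le> a" and "\<exists>x\<in>P. a < v \<bullet> x"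
    and cap_small: "measure lebesgue (P \<inter> {x. a < v \<bullet> x}) < \<epsilon> * \<mu>"
    using halfspace_cap_measure_small[OF \<open>bounded P\<close> \<open>open P\<close> \<open>x0 \<in> P\<close> \<open>v \<noteq> 0\<close>, of "\<epsilon> * \<mu>"]
      \<open>\<epsilon> > 0\<close> \<open>\<mu> > 0\<close> by auto
  define c where "c = (\<integral>x\<in>P. max 0 (v \<bullet> x - a) \<partial>lebesgue) / \<mu>"
  note hinge = hinge_minus_mean[OF assms(1-3) \<open>x0 \<in> P\<close> \<open>v \<bullet> x0 \<le> a\<close> \<open>\<exists>x\<in>P. a < v \<bullet> x\<close>,
      folded \<mu>_def, folded c_def]
  have "P \<inter> {x. a < v \<bullet> x} \<in> sets lebesgue"
    using \<open>open P\<close> open_halfspace_gt[of a v] by auto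
  moreover have "P \<inter> {x. v \<bullet> x \<le> a} = P - P \<inter> {x. a < v \<bullet> x}"
    by auto
  ultimately have "measure lebesgue (P \<inter> {x. v \<bullet> x \<le> a}) = \<mu> - measure lebesgue (P \<inter> {x. a < v \<bullet> x})"
    using measurable_measure_Diff[OF P] by (simp add: \<mu>_def)
  then have "(1 - \<epsilon>) * \<mu> \<le> measure lebesgue (P \<inter> {x. v \<bullet> x \<le> a})"
    using cap_small by (simp add: algebra_simps)
  then have "2 * c * (1 - \<epsilon>) * \<mu> \<le> 2 * c * measure lebesgue (P \<inter> {x. v \<bullet> x \<le> a})"
    using mult_left_mono[of _ _ "2 * c"] hinge(1) by (simp add: mult.assoc)
  with hinge(6) have "- 2 * (1 - \<epsilon>) * - c \<le> (1 / \<mu>) * (\<integral>x\<in>P. \<bar>max 0 (v \<bullet> x - a) - c\<bar> \<partial>lebesgue)"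
    using \<open>\<mu> > 0\<close> by (simp add: field_simps)
  then show ?thesis
    using hinge(1-5) unfolding \<mu>_def by (intro exI[of _ "\<lambda>x. max 0 (v \<bullet> x - a) - c"]) auto
qed

lemma convex_mean_zero_abs_integral_neq:
  fixes P :: "'a::euclidean_space set" and \<phi> :: "'a \<Rightarrow> real"
  assumes "bounded P" and "open P" and conv: "convex_on P \<phi>" and "set_integrable lebesgue P \<phi>"
    and "(\<integral>x\<in>P. \<phi> x \<partial>lebesgue) = 0" and nonzero: "\<exists>x\<in>P. \<phi> x \<noteq> 0"
  shows "(1 / measure lebesgue P) * (\<integral>x\<in>P. \<bar>\<phi> x\<bar> \<partial>lebesgue) \<noteq> - 2 * Inf (\<phi> ` P)"
proof -
  have P: "P \<in> lmeasurable"
    using \<open>bounded P\<close> \<open>open P\<close> by (rule lmeasurable_open)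
  have "Inf (\<phi> ` P) \<le> \<phi> x" if "x \<in> P" for x
    using convex_on_bdd_below[OF \<open>bounded P\<close> \<open>open P\<close> conv] that by (simp add: cInf_lower)
  then have "(\<integral>x\<in>P. \<bar>\<phi> x\<bar> \<partial>lebesgue) < - 2 * Inf (\<phi> ` P) * measure lebesgue P"
    using set_integral_abs_less_of_mean_zero[OF \<open>open P\<close> P convex_on_continuous[OF \<open>open P\<close> conv]]
      assms(4,5) nonzero by blast
  moreover have "0 < measure lebesgue P"
    using open_lmeasurable_measure_pos[OF \<open>open P\<close> P] nonzero by blast
  ultimately show ?thesis
    by (simp add: field_simps)
qed

theorem mainTheorem2:
  fixes P :: "'a::euclidean_space set"
  assumes "bounded P" and "open P" and "convex P" and "P \<noteq> {}"
  shows "(\<forall>\<epsilon>>0. \<exists>\<phi> :: 'a \<Rightarrow> real.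
            convex_on P \<phi> \<and> set_integrable lebesgue P \<phi> \<and>
            (\<integral>x\<in>P. \<phi> x \<partial>lebesgue) = 0 \<and>
            Inf (\<phi> ` P) < 0 \<and>
            (1 / measure lebesgue P) * (\<integral>x\<in>P. \<bar>\<phi> x\<bar> \<partial>lebesgue)
              \<ge> - 2 * (1 - \<epsilon>) * Inf (\<phi> ` P))
       \<and> \<not> (\<exists>\<phi> :: 'a \<Rightarrow> real.
            convex_on P \<phi> \<and> set_integrable lebesgue P \<phi> \<and>
            (\<integral>x\<in>P. \<phi> x \<partial>lebesgue) = 0 \<and>
            (\<exists>x\<in>P. \<phi> x \<noteq> 0) \<and>
            (1 / measure lebesgue P) * (\<integral>x\<in>P. \<bar>\<phi> x\<bar> \<partial>lebesgue)
              = - 2 * Inf (\<phi> ` P))"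
  using convex_mean_zero_abs_integral_near_extremal[OF assms]
    convex_mean_zero_abs_integral_neq[OF assms(1,2)] by blast

end
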